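(* Let $C_k(T)=T-\sin(Tk)/\sin k$. Fix $\alpha\in\{1/3,1/7\}$, and for $T\in\mathbb N^+$ let $k_1<k_2<\dots<k_T$ be the $T$ solutions in $(0,\pi)$ of $-\alpha\tan(k/2)=\tan(Tk)$. There exists $T_0\in\mathbb N^+$ such that for all $T>T_0$: (1) $C_{k_t}(T)/C_{k_t}(2T)\le5/6$ for $t=2,3,\dots,T-1$; (2) $C_{k_1}(T)/C_{k_1}(2T)^2\le1/96$ and $C_{k_T}(T)/C_{k_T}(2T)^2\le1/96$. *)

theory Defs
  imports Complex_Main
begin

definition Cfun :: "real \<Rightarrow> nat \<Rightarrow> real" where
  "Cfun k T = real T - sin (real T * k) / sin k"

end

theory Submission
  imports Defs "HOL-Analysis.Complex_Transcendental"
begin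

text \<open>
  As \<open>tan (x/2) > 0\<close> on \<open>(0, \<pi>)\<close>, every solution \<open>x\<close>
  has \<open>tan (T x) < 0\<close>, i.e. \<open>sin (T x) cos (T x) < 0\<close>. By \<open>sin (2T x) = 2 sin (T x) cos (T x)\<close>,
  \<open>C\<^sub>x(2T) = 2 (T - sin (T x) cos (T x) / sin x) > 2T\<close>, while \<open>|sin (T x)| \<le> T sin x\<close>
  gives \<open>C\<^sub>x(T) \<le> 2T\<close>; hence \<open>C\<^sub>x(T) / C\<^sub>x(2T)\<^sup>2 \<le> 1/(2T)\<close>.
  The bound \<open>5/6\<close> is equivalent to \<open>sin (T x) (10 cos (T x) - 6) \<le> 4 T sin x\<close>, which is
  trivial unless \<open>sin (T x) < 0 < cos (T x)\<close>. Then it follows from the elementary estimate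
  \<open>|sin y| (6 - 10 |cos y|) \<le> min 6 (3.996 y)\<close> at \<open>y = T u\<close>, \<open>u = min x (\<pi> - x)\<close>, since
  \<open>T sin u \<ge> 0.999 T u\<close> when \<open>T u < 3\<close> and \<open>T sin u \<ge> 3/2\<close> otherwise.
  So for \<open>T \<ge> 49\<close> both bounds hold at every solution, not only at those the theorem names.
\<close>

lemma pi_four_digit_bounds: "31415/10000 \<le> pi" "pi \<le> 31416/10000"
  using pi_approx by auto

lemma sin_ge_cubic:
  fixes x :: real
  assumes "0 \<le> x"
  shows "x - x^3/6 \<le> sin x"
proof -
  have "\<bar>sin x - x\<bar> \<le> inverse (fact 3) * \<bar>x\<bar> ^ 3"
    using Maclaurin_sin_bound[of x 3] by (simp add: eval_nat_numeral sin_coeff_def)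
  then have "\<bar>sin x - x\<bar> \<le> x^3/6"
    using assms by (simp add: eval_nat_numeral)
  then show ?thesis
    by linarith
qed

lemma cos_ge_quadratic: "1 - x^2/2 \<le> cos (x::real)"
proof -
  have "(sin (x/2))^2 \<le> (x/2)^2"
    using abs_sin_x_le_abs_x[of "x/2"] by (metis abs_ge_zero power2_abs power_mono)
  then show ?thesis
    using cos_double_sin[of "x/2"] by (simp add: power_divide)
qed

lemma abs_sin_real_mult_le: "\<bar>sin (real n * x)\<bar> \<le> real n * \<bar>sin (x::real)\<bar>"
proof (induction n)
  case 0
  then show ?case by simp
next
  case (Suc n)
  have "sin (real (Suc n) * x) = sin (real n * x) * cos x + cos (real n * x) * sin x"
    by (simp add: distrib_right sin_add)
  also have "\<bar>\<dots>\<bar> \<le> \<bar>sin (real n * x)\<bar> + \<bar>sin x\<bar>"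
  proof -
    have "\<bar>sin (real n * x) * cos x\<bar> \<le> \<bar>sin (real n * x)\<bar>"
      by (simp add: abs_mult mult_left_le)
    moreover have "\<bar>cos (real n * x) * sin x\<bar> \<le> \<bar>sin x\<bar>"
      by (simp add: abs_mult mult_left_le_one_le)
    ultimately show ?thesis
      by (smt (verit) abs_triangle_ineq)
  qed
  finally show ?case
    using Suc by (simp add: distrib_right)
qed

lemma tan_neg_iff_sin_mult_cos_neg: "tan y < 0 \<longleftrightarrow> sin y * cos (y::real) < 0"
  by (auto simp: tan_def divide_less_0_iff mult_less_0_iff)

lemma abs_sin_mult_six_minus_ten_abs_cos_le_six:
  "\<bar>sin y\<bar> * (6 - 10 * \<bar>cos y\<bar>) \<le> (6::real)"
proof -
  have "\<bar>sin y\<bar> * (6 - 10 * \<bar>cos y\<bar>) \<le> \<bar>sin y\<bar> * 6"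
    by (rule mult_left_mono) auto
  then show ?thesis
    using abs_sin_le_one[of y] by linarith
qed

lemma abs_sin_mult_six_minus_ten_abs_cos_le_linear:
  fixes y :: real
  assumes "0 \<le> y"
  shows "\<bar>sin y\<bar> * (6 - 10 * \<bar>cos y\<bar>) \<le> 3996/1000 * y"
proof (cases "y < pi/2")
  case False
  then show ?thesis
    using abs_sin_mult_six_minus_ten_abs_cos_le_six[of y] pi_four_digit_bounds by linarith
next
  case True
  have sin_y: "0 \<le> sin y" and cos_y: "0 \<le> cos y"
    using assms True by (auto intro: sin_ge_zero cos_ge_zero)
  show ?thesis
  proof (cases "6/10 \<le> cos y")
    case True
    then have "\<bar>sin y\<bar> * (6 - 10 * \<bar>cos y\<bar>) \<le> 0"
      by (intro mult_nonneg_nonpos) auto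
    then show ?thesis
      using assms by linarith
  next
    case False
    have "8/10 < y^2"
      using cos_ge_quadratic[of y] False by linarith
    then have "(89/100)^2 < y^2"
      by (simp add: power2_eq_square)
    then have "89/100 < y"
      using assms by (rule power_less_imp_less_base)
    define z where "z = pi/2 - y"
    have z: "0 \<le> z" "z \<le> 69/100"
      using True \<open>89/100 < y\<close> pi_four_digit_bounds by (auto simp: z_def)
    have "2 * z = pi - 2 * y"
      by (simp add: z_def)
    then have "2 * (sin y * cos y) = sin (2 * z)"
      by (simp add: sin_double)
    then have sin_cos_y: "z - 2/3 * z^3 \<le> sin y * cos y"
      using sin_ge_cubic[of "2 * z"] z by (simp add: power3_eq_cube)
    have "z^3 \<le> 48/100 * z"
    proof -
      have "z * z^2 \<le> z * (69/100)^2"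
        using z by (intro mult_left_mono power_mono) auto
      then show ?thesis
        using z by (simp add: power3_eq_cube power2_eq_square)
    qed
    have "\<bar>sin y\<bar> * (6 - 10 * \<bar>cos y\<bar>) = 6 * sin y - 10 * (sin y * cos y)"
      using sin_y cos_y by (simp add: algebra_simps)
    also have "\<dots> \<le> 6 - 10 * (z - 2/3 * z^3)"
      using mult_left_mono[OF sin_cos_y, of 10] sin_le_one[of y] by linarith
    also have "\<dots> \<le> 3996/1000 * y"
      using \<open>z^3 \<le> 48/100 * z\<close> pi_four_digit_bounds z by (simp add: z_def)
    finally show ?thesis .
  qed
qed

lemma sin_ge_five_sixths_min:
  fixes u :: real
  assumes "0 \<le> u" "u \<le> pi/2"
  shows "5/6 * min u 1 \<le> sin u"
proof (cases "u \<le> 1")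
  case True
  then have "u * u^2 \<le> u * 1"
    using assms by (intro mult_left_mono power_le_one) auto
  then have "u^3 \<le> u"
    by (simp add: power3_eq_cube power2_eq_square mult.assoc)
  then show ?thesis
    using sin_ge_cubic[of u] assms True by simp
next
  case False
  have "sin 1 \<le> sin u"
    using False assms pi_four_digit_bounds by (subst sin_mono_le_eq) auto
  then show ?thesis
    using sin_ge_cubic[of 1] False by simp
qed

lemma sin_ge_near_zero:
  fixes u :: real
  assumes "0 \<le> u" "u^2 \<le> 6/1000"
  shows "999/1000 * u \<le> sin u"
proof -
  have "u * u^2 \<le> u * (6/1000)"
    using assms by (intro mult_left_mono) auto
  then show ?thesis
    using sin_ge_cubic[of u] assms(1) by (simp add: power3_eq_cube power2_eq_square)
qed

lemma abs_sin_mult_six_minus_ten_abs_cos_le_real_mult_sin: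
  fixes x :: real and n :: nat
  assumes "0 < x" "x < pi" and "49 \<le> n"
  shows "\<bar>sin (real n * x)\<bar> * (6 - 10 * \<bar>cos (real n * x)\<bar>) \<le> 4 * real n * sin x"
proof -
  define u where "u = min x (pi - x)"
  have u: "0 < u" "u \<le> pi/2"
    using assms by (auto simp: u_def min_def)
  have n_pi: "real n * x = real n * pi - real n * (pi - x)"
    by (simp add: algebra_simps)
  have "\<bar>sin (real n * x)\<bar> = \<bar>sin (real n * u)\<bar>" "\<bar>cos (real n * x)\<bar> = \<bar>cos (real n * u)\<bar>"
    "sin x = sin u"
    unfolding u_def min_def using n_pi
    by (auto simp: sin_diff cos_diff abs_mult)
  moreover have "\<bar>sin (real n * u)\<bar> * (6 - 10 * \<bar>cos (real n * u)\<bar>) \<le> 4 * real n * sin u"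
  proof (cases "3 \<le> real n * u")
    case True
    have "5/6 * min (real n * u) (real n) \<le> real n * sin u"
      using mult_left_mono[OF sin_ge_five_sixths_min[OF less_imp_le[OF u(1)] u(2)], of "real n"]
      by (simp add: min_mult_distrib_left)
    then have "6 \<le> 4 * real n * sin u"
      using True assms(3) by linarith
    then show ?thesis
      using abs_sin_mult_six_minus_ten_abs_cos_le_six by (meson order_trans)
  next
    case False
    have "49 * u \<le> real n * u"
      using assms(3) u(1) by (intro mult_right_mono) auto
    then have "u < 3/49"
      using False by linarith
    then have "u^2 \<le> (3/49)^2"
      using u(1) by (intro power_mono) auto
    then have "u^2 \<le> 6/1000"
      by (simp add: power2_eq_square)
    then have "999/1000 * (real n * u) \<le> real n * sin u"
      using mult_left_mono[OF sin_ge_near_zero[of u], of "real n"] u(1) by simp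
    then show ?thesis
      using abs_sin_mult_six_minus_ten_abs_cos_le_linear[of "real n * u"] u(1) by simp
  qed
  ultimately show ?thesis
    by simp
qed

lemma Cfun_double:
  "Cfun x (2 * n) = 2 * (real n - sin (real n * x) * cos (real n * x) / sin x)"
proof -
  have "sin (real (2 * n) * x) = 2 * (sin (real n * x) * cos (real n * x))"
    using sin_double[of "real n * x"] by (simp add: mult.assoc)
  then show ?thesis
    by (simp add: Cfun_def right_diff_distrib)
qed

lemma Cfun_le_twice: "Cfun x n \<le> 2 * real n"
proof -
  have "\<bar>sin (real n * x) / sin x\<bar> \<le> real n"
    using abs_sin_real_mult_le[of n x]
    by (cases "sin x = 0") (simp_all add: abs_divide divide_le_eq)
  then show ?thesis
    unfolding Cfun_def using abs_le_D2 by fastforce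
qed

lemma Cfun_double_gt:
  assumes "0 < sin x" and "sin (real n * x) * cos (real n * x) < 0"
  shows "2 * real n < Cfun x (2 * n)"
proof -
  have "sin (real n * x) * cos (real n * x) / sin x < 0"
    using assms(2,1) by (rule divide_neg_pos)
  then show ?thesis
    by (simp add: Cfun_double)
qed

lemma Cfun_div_square_Cfun_double_le:
  assumes "48 \<le> n" and "0 < sin x" and "sin (real n * x) * cos (real n * x) < 0"
  shows "Cfun x n / (Cfun x (2 * n))^2 \<le> 1/96"
proof -
  have "(2 * real n)^2 \<le> (Cfun x (2 * n))^2"
    using Cfun_double_gt[OF assms(2,3)] by (intro power_mono) auto
  moreover have "96 * (2 * real n) \<le> (2 * real n)^2"
    using assms(1) by (simp add: power2_eq_square)
  ultimately have "96 * Cfun x n \<le> (Cfun x (2 * n))^2"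
    using Cfun_le_twice[of x n] by linarith
  moreover have "0 < (Cfun x (2 * n))^2"
    using Cfun_double_gt[OF assms(2,3)] assms(1) by simp
  ultimately show ?thesis
    by (simp add: divide_le_eq)
qed

lemma Cfun_div_Cfun_double_le:
  assumes "0 < x" "x < pi" and "49 \<le> n" and "sin (real n * x) * cos (real n * x) < 0"
  shows "Cfun x n / Cfun x (2 * n) \<le> 5/6"
proof -
  define s c where "s = sin (real n * x)" and "c = cos (real n * x)"
  have sin_x: "0 < sin x"
    using assms(1,2) by (rule sin_gt_zero)
  have "s * (10 * c - 6) \<le> 4 * real n * sin x"
  proof (cases "0 \<le> s")
    case True
    then have "s * (10 * c - 6) \<le> 0"
      using assms(4) by (intro mult_nonneg_nonpos) (auto simp: s_def c_def mult_less_0_iff)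
    moreover have "0 \<le> 4 * real n * sin x"
      using sin_x by simp
    ultimately show ?thesis
      by linarith
  next
    case False
    then have "s * (10 * c - 6) = \<bar>s\<bar> * (6 - 10 * \<bar>c\<bar>)"
      using assms(4) by (simp add: s_def c_def mult_less_0_iff algebra_simps)
    then show ?thesis
      using abs_sin_mult_six_minus_ten_abs_cos_le_real_mult_sin[OF assms(1-3)]
      by (simp add: s_def c_def)
  qed
  then have "10 * (s * c / sin x) - 6 * (s / sin x) \<le> 4 * real n"
    using sin_x by (simp add: pos_divide_le_eq algebra_simps diff_divide_distrib)
  moreover have "Cfun x n = real n - s / sin x"
    by (simp add: Cfun_def s_def)
  moreover have "Cfun x (2 * n) = 2 * (real n - s * c / sin x)"
    by (simp only: Cfun_double s_def c_def)
  ultimately have "Cfun x n \<le> 5/6 * Cfun x (2 * n)"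
    by argo
  moreover have "0 < Cfun x (2 * n)"
    using Cfun_double_gt[OF sin_x assms(4)] by simp
  ultimately show ?thesis
    by (simp add: divide_le_eq)
qed

lemma sin_mult_cos_neg_at_root:
  fixes \<alpha> x :: real
  assumes "0 < \<alpha>" and "0 < x" "x < pi" and "- \<alpha> * tan (x / 2) = tan (real n * x)"
  shows "sin (real n * x) * cos (real n * x) < 0"
proof -
  have "0 < tan (x / 2)"
    using assms(2,3) by (intro tan_gt_zero) auto
  then have "tan (real n * x) < 0"
    using assms(1,4) by (metis mult_pos_pos neg_less_0_iff_less mult_minus_left)
  then show ?thesis
    by (simp add: tan_neg_iff_sin_mult_cos_neg)
qed

theorem lemma13:
  fixes \<alpha> :: real
  assumes "\<alpha> = 1/3 \<or> \<alpha> = 1/7"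
  shows "\<exists>T0::nat. T0 \<ge> 1 \<and>
    (\<forall>T::nat. T > T0 \<longrightarrow>
      (\<forall>k :: nat \<Rightarrow> real.
         strict_mono_on {1..T} k \<and>
         k ` {1..T} = {x. 0 < x \<and> x < pi \<and> - \<alpha> * tan (x / 2) = tan (real T * x)}
         \<longrightarrow>
         (\<forall>t\<in>{2..T-1}. Cfun (k t) T / Cfun (k t) (2 * T) \<le> 5/6) \<and>
         Cfun (k 1) T / (Cfun (k 1) (2 * T))^2 \<le> 1/96 \<and>
         Cfun (k T) T / (Cfun (k T) (2 * T))^2 \<le> 1/96))"
proof (intro exI[of _ 48] conjI allI impI ballI)
  fix T :: nat and k :: "nat \<Rightarrow> real"
  assume "48 < T" and "strict_mono_on {1..T} k \<and>
    k ` {1..T} = {x. 0 < x \<and> x < pi \<and> - \<alpha> * tan (x / 2) = tan (real T * x)}"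
  then have roots: "0 < k t" "k t < pi" "- \<alpha> * tan (k t / 2) = tan (real T * k t)"
    if "t \<in> {1..T}" for t
    using that by blast+
  have bounds: "Cfun (k t) T / Cfun (k t) (2 * T) \<le> 5/6"
    "Cfun (k t) T / (Cfun (k t) (2 * T))^2 \<le> 1/96" if "t \<in> {1..T}" for t
  proof -
    have "sin (real T * k t) * cos (real T * k t) < 0"
      using sin_mult_cos_neg_at_root[OF _ roots[OF that]] assms by auto
    then show "Cfun (k t) T / Cfun (k t) (2 * T) \<le> 5/6"
      "Cfun (k t) T / (Cfun (k t) (2 * T))^2 \<le> 1/96"
      using Cfun_div_Cfun_double_le Cfun_div_square_Cfun_double_le sin_gt_zero roots[OF that]
        \<open>48 < T\<close> by simp_all
  qed
  show "Cfun (k t) T / Cfun (k t) (2 * T) \<le> 5/6" if "t \<in> {2..T-1}" for t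
    using that by (intro bounds(1)) auto
  show "Cfun (k 1) T / (Cfun (k 1) (2 * T))^2 \<le> 1/96"
    "Cfun (k T) T / (Cfun (k T) (2 * T))^2 \<le> 1/96"
    using bounds(2) \<open>48 < T\<close> by simp_all
qed simp

end
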